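(* Let $\alpha\in\mathbb C$ and define sequences $u(k),v(k),f(k),g(k)$, $k\ge0$, by $u(0)=v(0)=0$, $f(0)=g(0)=1$ (so $u(1)=v(1)=1$) and, for $k\ge1$, $$u(k)=u(k-1)+f(k-1),\quad v(k)=v(k-1)+g(k-1),\quad f(k)=\frac{u(k)}{v(k)}\,g(k-1),\quad g(k)=\frac{\alpha v(k)}{k-\frac{\alpha u(k)}{f(k-1)}-\frac{\alpha v(k)}{g(k-1)}}.$$ (These are the recurrences equivalent to the constraints $\alpha u(k)=k\frac{f(k)g(k)f(k-1)}{f(k)g(k)+g(k)f(k-1)+f(k-1)g(k-1)}$, $\alpha v(k)=k\frac{g(k)f(k-1)g(k-1)}{f(k)g(k)+g(k)f(k-1)+f(k-1)g(k-1)}$ with $f(k)=u(k+1)-u(k)$, $g(k)=v(k+1)-v(k)$.) Then, for all $k$ such that the arguments are nonnegative integers, $$u(3k)=\frac{2k}{k+2\alpha}\Pi_1(k),\quad u(3k+1)=\frac{2k+2\alpha}{k+2\alpha}\Pi_1(k),\quad u(3k+2)=2\Pi_1(k),\quad f(3k-1)=f(3k)=f(3k+1)=\frac{2\alpha}{k+2\alpha}\Pi_1(k),$$ $$v(3k-1)=\frac{k-\alpha}{k+\alpha}\Pi_2(k),\quad v(3k)=\frac{k}{k+\alpha}\Pi_2(k),\quad v(3k+1)=\Pi_2(k),\quad g(3k-2)=g(3k-1)=g(3k)=\frac{\alpha}{k+\alpha}\Pi_2(k),$$ where $$\Pi_1(k)=\prod_{j=1}^k\frac{j+2\alpha}{j-\alpha},\qquad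 \Pi_2(k)=\prod_{j=1}^k\frac{j+\alpha}{j-2\alpha}.$$
   Context: Empty products equal $1$. The parameter $\alpha$ is such that all denominators occurring are nonzero. *)

theory Defs
  imports Complex_Main
begin

text \<open>The sequences (u k, v k, f k, g k) defined by the recurrences of the paper.
  Division uses the HOL convention x / 0 = 0; the theorem assumes all
  denominators are nonzero.\<close>

fun uvfg :: "complex \<Rightarrow> nat \<Rightarrow> complex \<times> complex \<times> complex \<times> complex" where
  "uvfg \<alpha> 0 = (0, 0, 1, 1)"
| "uvfg \<alpha> (Suc k) =
     (case uvfg \<alpha> k of (u0, v0, f0, g0) \<Rightarrow>
       (let u1 = u0 + f0; v1 = v0 + g0 in
        (u1, v1, u1 / v1 * g0,
         \<alpha> * v1 / (of_nat (Suc k) - \<alpha> * u1 / f0 - \<alpha> * v1 / g0))))"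

definition useq :: "complex \<Rightarrow> nat \<Rightarrow> complex" where
  "useq \<alpha> k = fst (uvfg \<alpha> k)"
definition vseq :: "complex \<Rightarrow> nat \<Rightarrow> complex" where
  "vseq \<alpha> k = fst (snd (uvfg \<alpha> k))"
definition fseq :: "complex \<Rightarrow> nat \<Rightarrow> complex" where
  "fseq \<alpha> k = fst (snd (snd (uvfg \<alpha> k)))"
definition gseq :: "complex \<Rightarrow> nat \<Rightarrow> complex" where
  "gseq \<alpha> k = snd (snd (snd (uvfg \<alpha> k)))"

definition Pi1 :: "complex \<Rightarrow> nat \<Rightarrow> complex" where
  "Pi1 \<alpha> k = (\<Prod>j=1..k. (of_nat j + 2 * \<alpha>) / (of_nat j - \<alpha>))"
definition Pi2 :: "complex \<Rightarrow> nat \<Rightarrow> complex" where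
  "Pi2 \<alpha> k = (\<Prod>j=1..k. (of_nat j + \<alpha>) / (of_nat j - 2 * \<alpha>))"

end

theory Submission
  imports Defs
begin

(* Along the recurrence the state (u, v, f, g) returns to the same shape every three steps, up to
   the factors of Pi1 and Pi2.  So it suffices to guess the closed forms at 3k, 3k+1, 3k+2 and
   push them through one step of the recurrence each; in these three steps the denominator
   k - \<alpha> u(k) / f(k-1) - \<alpha> v(k) / g(k-1) collapses to k+1-2\<alpha>, k+1-\<alpha> and k+1,
   which is where the new factors of Pi1 and Pi2 come from. *)

lemma uvfg_Suc_eqI:
  assumes "uvfg \<alpha> n = (u, v, f, g)"
    and "u' = u + f" "v' = v + g" "f' = u' / v' * g"
    and "of_nat (Suc n) - \<alpha> * u' / f - \<alpha> * v' / g = D"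
    and "g' = \<alpha> * v' / D"
  shows "uvfg \<alpha> (Suc n) = (u', v', f', g')"
  using assms by (simp add: Let_def)

lemma Pi1_Suc: "Pi1 \<alpha> (Suc k) = Pi1 \<alpha> k * (of_nat (Suc k) + 2 * \<alpha>) / (of_nat (Suc k) - \<alpha>)"
  unfolding Pi1_def by (simp add: prod.cl_ivl_Suc)

lemma Pi2_Suc: "Pi2 \<alpha> (Suc k) = Pi2 \<alpha> k * (of_nat (Suc k) + \<alpha>) / (of_nat (Suc k) - 2 * \<alpha>)"
  unfolding Pi2_def by (simp add: prod.cl_ivl_Suc)

definition closed_form_3k :: "complex \<Rightarrow> nat \<Rightarrow> complex \<times> complex \<times> complex \<times> complex" where
  "closed_form_3k \<alpha> k =
     (2 * of_nat k / (of_nat k + 2 * \<alpha>) * Pi1 \<alpha> k,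
      of_nat k / (of_nat k + \<alpha>) * Pi2 \<alpha> k,
      2 * \<alpha> / (of_nat k + 2 * \<alpha>) * Pi1 \<alpha> k,
      \<alpha> / (of_nat k + \<alpha>) * Pi2 \<alpha> k)"

(* The paper's values at 3(k+1)-2 and 3(k+1)-1 are written here with k+1 in place of k. *)
definition closed_form_3k1 :: "complex \<Rightarrow> nat \<Rightarrow> complex \<times> complex \<times> complex \<times> complex" where
  "closed_form_3k1 \<alpha> k =
     ((2 * of_nat k + 2 * \<alpha>) / (of_nat k + 2 * \<alpha>) * Pi1 \<alpha> k,
      Pi2 \<alpha> k,
      2 * \<alpha> / (of_nat k + 2 * \<alpha>) * Pi1 \<alpha> k,
      \<alpha> / (of_nat (Suc k) + \<alpha>) * Pi2 \<alpha> (Suc k))"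

definition closed_form_3k2 :: "complex \<Rightarrow> nat \<Rightarrow> complex \<times> complex \<times> complex \<times> complex" where
  "closed_form_3k2 \<alpha> k =
     (2 * Pi1 \<alpha> k,
      (of_nat (Suc k) - \<alpha>) / (of_nat (Suc k) + \<alpha>) * Pi2 \<alpha> (Suc k),
      2 * \<alpha> / (of_nat (Suc k) + 2 * \<alpha>) * Pi1 \<alpha> (Suc k),
      \<alpha> / (of_nat (Suc k) + \<alpha>) * Pi2 \<alpha> (Suc k))"

locale nondegenerate_parameter =
  fixes \<alpha> :: complex
  assumes minus_nonzero: "\<And>j::nat. j \<ge> 1 \<Longrightarrow> of_nat j - \<alpha> \<noteq> 0 \<and> of_nat j - 2 * \<alpha> \<noteq> 0"
    and plus_nonzero: "\<And>k::nat. of_nat k + \<alpha> \<noteq> 0 \<and> of_nat k + 2 * \<alpha> \<noteq> 0"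
begin

lemma alpha_nonzero: "\<alpha> \<noteq> 0"
  using plus_nonzero[of 0] by simp

lemma Pi1_nonzero: "Pi1 \<alpha> k \<noteq> 0"
  unfolding Pi1_def using minus_nonzero plus_nonzero by simp

lemma Pi2_nonzero: "Pi2 \<alpha> k \<noteq> 0"
  unfolding Pi2_def using minus_nonzero plus_nonzero by simp

lemma linear_factors_nonzero:
  "of_nat k + \<alpha> \<noteq> 0" "of_nat k + 2 * \<alpha> \<noteq> 0"
  "of_nat (Suc k) + \<alpha> \<noteq> 0" "of_nat (Suc k) + 2 * \<alpha> \<noteq> 0"
  "of_nat (Suc k) - \<alpha> \<noteq> 0" "of_nat (Suc k) - 2 * \<alpha> \<noteq> 0"
  using plus_nonzero[of k] plus_nonzero[of "Suc k"] minus_nonzero[of "Suc k"] by simp_all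

lemmas nonzero_factors = alpha_nonzero Pi1_nonzero Pi2_nonzero linear_factors_nonzero of_nat_neq_0

lemma closed_form_3k_step:
  assumes "uvfg \<alpha> (3 * k) = closed_form_3k \<alpha> k"
  shows "uvfg \<alpha> (3 * k + 1) = closed_form_3k1 \<alpha> k"
proof -
  have denom: "of_nat (Suc (3 * k))
      - \<alpha> * ((2 * of_nat k + 2 * \<alpha>) / (of_nat k + 2 * \<alpha>) * Pi1 \<alpha> k)
          / (2 * \<alpha> / (of_nat k + 2 * \<alpha>) * Pi1 \<alpha> k)
      - \<alpha> * Pi2 \<alpha> k / (\<alpha> / (of_nat k + \<alpha>) * Pi2 \<alpha> k)
     = of_nat (Suc k) - 2 * \<alpha>"
    using nonzero_factors by (simp add: divide_simps; simp add: algebra_simps)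
  have "uvfg \<alpha> (Suc (3 * k)) = closed_form_3k1 \<alpha> k"
    unfolding closed_form_3k1_def
    apply (rule uvfg_Suc_eqI[OF assms[unfolded closed_form_3k_def] _ _ _ denom])
    apply (insert nonzero_factors)
    by (simp_all add: Pi2_Suc divide_simps) (simp_all add: algebra_simps)
  then show ?thesis
    by simp
qed

lemma closed_form_3k1_step:
  assumes "uvfg \<alpha> (3 * k + 1) = closed_form_3k1 \<alpha> k"
  shows "uvfg \<alpha> (3 * k + 2) = closed_form_3k2 \<alpha> k"
proof -
  have denom: "of_nat (Suc (3 * k + 1))
      - \<alpha> * (2 * Pi1 \<alpha> k) / (2 * \<alpha> / (of_nat k + 2 * \<alpha>) * Pi1 \<alpha> k)
      - \<alpha> * ((of_nat (Suc k) - \<alpha>) / (of_nat (Suc k) + \<alpha>) * Pi2 \<alpha> (Suc k))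
          / (\<alpha> / (of_nat (Suc k) + \<alpha>) * Pi2 \<alpha> (Suc k))
     = of_nat (Suc k) - \<alpha>"
    using nonzero_factors by (simp add: divide_simps; simp add: algebra_simps)
  have "uvfg \<alpha> (Suc (3 * k + 1)) = closed_form_3k2 \<alpha> k"
    unfolding closed_form_3k2_def
    apply (rule uvfg_Suc_eqI[OF assms[unfolded closed_form_3k1_def] _ _ _ denom])
    apply (insert nonzero_factors)
    by (simp_all add: Pi1_Suc Pi2_Suc divide_simps) (simp_all add: algebra_simps)
  then show ?thesis
    by simp
qed

lemma closed_form_3k2_step:
  assumes "uvfg \<alpha> (3 * k + 2) = closed_form_3k2 \<alpha> k"
  shows "uvfg \<alpha> (3 * Suc k) = closed_form_3k \<alpha> (Suc k)"
proof -
  have denom: "of_nat (Suc (3 * k + 2))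
      - \<alpha> * (2 * of_nat (Suc k) / (of_nat (Suc k) + 2 * \<alpha>) * Pi1 \<alpha> (Suc k))
          / (2 * \<alpha> / (of_nat (Suc k) + 2 * \<alpha>) * Pi1 \<alpha> (Suc k))
      - \<alpha> * (of_nat (Suc k) / (of_nat (Suc k) + \<alpha>) * Pi2 \<alpha> (Suc k))
          / (\<alpha> / (of_nat (Suc k) + \<alpha>) * Pi2 \<alpha> (Suc k))
     = of_nat (Suc k)"
    using nonzero_factors by (simp add: divide_simps; simp add: algebra_simps)
  have "uvfg \<alpha> (Suc (3 * k + 2)) = closed_form_3k \<alpha> (Suc k)"
    unfolding closed_form_3k_def
    apply (rule uvfg_Suc_eqI[OF assms[unfolded closed_form_3k2_def] _ _ _ denom])
    apply (insert nonzero_factors)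
    by (simp_all add: Pi1_Suc divide_simps) (simp_all add: algebra_simps)
  then show ?thesis
    by (simp add: numeral_3_eq_3 del: uvfg.simps)
qed

lemma uvfg_3k: "uvfg \<alpha> (3 * k) = closed_form_3k \<alpha> k"
proof (induction k)
  case 0
  show ?case
    using alpha_nonzero by (simp add: closed_form_3k_def Pi1_def Pi2_def)
next
  case (Suc k)
  then show ?case
    by (intro closed_form_3k2_step closed_form_3k1_step closed_form_3k_step)
qed

lemma uvfg_3k1: "uvfg \<alpha> (3 * k + 1) = closed_form_3k1 \<alpha> k"
  by (rule closed_form_3k_step[OF uvfg_3k])

lemma uvfg_3k2: "uvfg \<alpha> (3 * k + 2) = closed_form_3k2 \<alpha> k"
  by (rule closed_form_3k1_step[OF uvfg_3k1])

lemma uvfg_3k_minus_2: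
  assumes "k \<ge> 1"
  shows "uvfg \<alpha> (3 * k - 2) = closed_form_3k1 \<alpha> (k - 1)"
proof -
  have "3 * k - 2 = 3 * (k - 1) + 1"
    using assms by simp
  then show ?thesis
    by (simp only: uvfg_3k1)
qed

lemma uvfg_3k_minus_1:
  assumes "k \<ge> 1"
  shows "uvfg \<alpha> (3 * k - 1) = closed_form_3k2 \<alpha> (k - 1)"
proof -
  have "3 * k - 1 = 3 * (k - 1) + 2"
    using assms by simp
  then show ?thesis
    by (simp only: uvfg_3k2)
qed

end

theorem theorem23:
  fixes \<alpha> :: complex
  assumes rec_denoms: "\<And>k. k \<ge> 1 \<Longrightarrow>
      vseq \<alpha> k \<noteq> 0 \<and> fseq \<alpha> (k - 1) \<noteq> 0 \<and> gseq \<alpha> (k - 1) \<noteq> 0 \<and>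
      of_nat k - \<alpha> * useq \<alpha> k / fseq \<alpha> (k - 1) - \<alpha> * vseq \<alpha> k / gseq \<alpha> (k - 1) \<noteq> 0"
    and prod_denoms: "\<And>j::nat. j \<ge> 1 \<Longrightarrow> of_nat j - \<alpha> \<noteq> 0 \<and> of_nat j - 2 * \<alpha> \<noteq> 0"
    and formula_denoms: "\<And>k::nat. of_nat k + \<alpha> \<noteq> 0 \<and> of_nat k + 2 * \<alpha> \<noteq> 0"
  shows "\<forall>k::nat.
      useq \<alpha> (3*k) = 2 * of_nat k / (of_nat k + 2*\<alpha>) * Pi1 \<alpha> k \<and>
      useq \<alpha> (3*k+1) = (2 * of_nat k + 2*\<alpha>) / (of_nat k + 2*\<alpha>) * Pi1 \<alpha> k \<and>
      useq \<alpha> (3*k+2) = 2 * Pi1 \<alpha> k \<and>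
      fseq \<alpha> (3*k) = 2*\<alpha> / (of_nat k + 2*\<alpha>) * Pi1 \<alpha> k \<and>
      fseq \<alpha> (3*k+1) = 2*\<alpha> / (of_nat k + 2*\<alpha>) * Pi1 \<alpha> k \<and>
      vseq \<alpha> (3*k) = of_nat k / (of_nat k + \<alpha>) * Pi2 \<alpha> k \<and>
      vseq \<alpha> (3*k+1) = Pi2 \<alpha> k \<and>
      gseq \<alpha> (3*k) = \<alpha> / (of_nat k + \<alpha>) * Pi2 \<alpha> k \<and>
      (k \<ge> 1 \<longrightarrow>
        fseq \<alpha> (3*k-1) = 2*\<alpha> / (of_nat k + 2*\<alpha>) * Pi1 \<alpha> k \<and>
        vseq \<alpha> (3*k-1) = (of_nat k - \<alpha>) / (of_nat k + \<alpha>) * Pi2 \<alpha> k \<and>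
        gseq \<alpha> (3*k-2) = \<alpha> / (of_nat k + \<alpha>) * Pi2 \<alpha> k \<and>
        gseq \<alpha> (3*k-1) = \<alpha> / (of_nat k + \<alpha>) * Pi2 \<alpha> k)"
proof -
  interpret nondegenerate_parameter \<alpha>
    using prod_denoms formula_denoms by unfold_locales
  show ?thesis
    unfolding useq_def vseq_def fseq_def gseq_def uvfg_3k uvfg_3k1 uvfg_3k2
    using uvfg_3k_minus_1 uvfg_3k_minus_2
    by (simp add: closed_form_3k_def closed_form_3k1_def closed_form_3k2_def del: uvfg.simps)
qed

end
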